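(* Let $\mathcal{A}\in\mathbb{C}^{I_{1\ldots N}\times I_{1\ldots N}}$ and let $\mathcal{N}\in\mathbb{C}^{I_{1\ldots N}\times I_{1\ldots N}}$ be a Hermitian positive definite tensor. If $\mathcal{A}$ is weighted normal, i.e. $\mathcal{A}^{\#}_{\mathcal{N}\mathcal{N}}*_N\mathcal{A}=\mathcal{A}*_N\mathcal{A}^{\#}_{\mathcal{N}\mathcal{N}}$, then $\mathcal{A}*_N\mathcal{A}^{\dagger}_{\mathcal{N},\mathcal{N}}=\mathcal{A}^{\dagger}_{\mathcal{N},\mathcal{N}}*_N\mathcal{A}$.
   Context: Write $I_{1\ldots N}$ for $I_1\times\cdots\times I_N$. Einstein product: $(\mathcal{A}*_N\mathcal{B})_{i_1\ldots i_Nj_1\ldots j_N}=\sum_{k_1,\ldots,k_N}a_{i_1\ldots i_Nk_1\ldots k_N}b_{k_1\ldots k_Nj_1\ldots j_N}$. $\mathcal{A}^H$ is the conjugate transpose. Inverses are with respect to $*_N$ and the identity tensor (entry 1 where the two index blocks coincide, 0 otherwise). $\mathcal{N}$ is Hermitian positive definite if $\mathcal{N}^H=\mathcal{N}$ and $\mathcal{X}^H*_N\mathcal{N}*_N\mathcal{X}>0$ for all nonzero $\mathcal{X}$. Weighted conjugate transpose: $\mathcal{A}^{\#}_{\mathcal{N}\mathcal{N}}=\mathcal{N}^{-1}*_N\mathcal{A}^H*_N\mathcal{N}$. Weighted Moore-Penrose inverse $\mathcal{A}^{\dagger}_{\mathcal{N},\mathcal{N}}$: the unique $\mathcal{X}$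 with $\mathcal{A}*_N\mathcal{X}*_N\mathcal{A}=\mathcal{A}$, $\mathcal{X}*_N\mathcal{A}*_N\mathcal{X}=\mathcal{X}$, $(\mathcal{N}*_N\mathcal{A}*_N\mathcal{X})^H=\mathcal{N}*_N\mathcal{A}*_N\mathcal{X}$, $(\mathcal{N}*_N\mathcal{X}*_N\mathcal{A})^H=\mathcal{N}*_N\mathcal{X}*_N\mathcal{A}$. *)

theory Defs
  imports "HOL-Analysis.Analysis"
begin

text \<open>Index tuples (i_1,...,i_N) with 0 \<le> i_k < I_k, represented as lists;
  I is the list of dimensions [I_1,...,I_N]. A tensor in
  C^(I_1..N x I_1..N) is a function of two index blocks; only its values on
  valid index tuples matter.\<close>

type_synonym tensor = "nat list \<Rightarrow> nat list \<Rightarrow> complex"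

definition idx :: "nat list \<Rightarrow> nat list set" where
  "idx I = {is. length is = length I \<and> (\<forall>k<length I. is ! k < I ! k)}"

definition teq :: "nat list \<Rightarrow> tensor \<Rightarrow> tensor \<Rightarrow> bool" where
  "teq I A B \<longleftrightarrow> (\<forall>i\<in>idx I. \<forall>j\<in>idx I. A i j = B i j)"

definition einstein :: "nat list \<Rightarrow> tensor \<Rightarrow> tensor \<Rightarrow> tensor" where
  "einstein I A B = (\<lambda>i j. \<Sum>k\<in>idx I. A i k * B k j)"

definition tid :: tensor where
  "tid = (\<lambda>i j. if i = j then 1 else 0)"

definition tH :: "tensor \<Rightarrow> tensor" where
  "tH A = (\<lambda>i j. cnj (A j i))"

definition hermitian :: "nat list \<Rightarrow> tensor \<Rightarrow> bool" where
  "hermitian I A \<longleftrightarrow> teq I (tH A) A"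

definition hpd :: "nat list \<Rightarrow> tensor \<Rightarrow> bool" where
  "hpd I M \<longleftrightarrow> hermitian I M \<and>
     (\<forall>x :: nat list \<Rightarrow> complex. (\<exists>i\<in>idx I. x i \<noteq> 0) \<longrightarrow>
        (\<Sum>i\<in>idx I. \<Sum>j\<in>idx I. cnj (x i) * M i j * x j) > 0)"

definition is_tinv :: "nat list \<Rightarrow> tensor \<Rightarrow> tensor \<Rightarrow> bool" where
  "is_tinv I A X \<longleftrightarrow> teq I (einstein I A X) tid \<and> teq I (einstein I X A) tid"

definition tinv :: "nat list \<Rightarrow> tensor \<Rightarrow> tensor" where
  "tinv I A = (SOME X. is_tinv I A X)"

definition wct :: "nat list \<Rightarrow> tensor \<Rightarrow> tensor \<Rightarrow> tensor" where
  "wct I M A = einstein I (einstein I (tinv I M) (tH A)) M"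

definition is_wmp :: "nat list \<Rightarrow> tensor \<Rightarrow> tensor \<Rightarrow> tensor \<Rightarrow> bool" where
  "is_wmp I M A X \<longleftrightarrow>
     teq I (einstein I (einstein I A X) A) A \<and>
     teq I (einstein I (einstein I X A) X) X \<and>
     teq I (tH (einstein I M (einstein I A X))) (einstein I M (einstein I A X)) \<and>
     teq I (tH (einstein I M (einstein I X A))) (einstein I M (einstein I X A))"

definition wmp :: "nat list \<Rightarrow> tensor \<Rightarrow> tensor \<Rightarrow> tensor" where
  "wmp I M A = (SOME X. is_wmp I M A X)"

end

theory Submission
  imports Defs "HOL-Library.Function_Algebras"
begin

text \<open>Restricted to the valid index tuples, tensors under the Einstein product are the square
  matrices over a finite index set, and the weighted conjugate transpose \<open>A\<^sup>#\<close> is an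
  involution on them with \<open>A\<^sup># A = 0\<close> only for \<open>A = 0\<close>, because \<open>N\<close> is positive definite.
  For weighted-normal \<open>A\<close> this gives \<open>A Y = 0 \<longleftrightarrow> A\<^sup># Y = 0\<close> and \<open>A\<^sup>2 Y = 0 \<longrightarrow> A Y = 0\<close>.
  Applied to \<open>A (1 - X A)\<close> and \<open>A\<^sup># (1 - A X)\<close>, the Penrose equations yield \<open>X A A = A = A A X\<close>,
  hence \<open>A X = X A A X = X A\<close>.  The weighted Moore-Penrose inverse exists (so that the
  choice in its definition is meaningful): a linear dependence among the powers of \<open>A\<close> becomes,
  after cancelling powers of \<open>A\<close>, a polynomial \<open>G\<close> in \<open>A\<close> with \<open>A\<^sup>2 G = A\<close>, and
  \<open>X = A G\<^sup>2\<close> solves the Penrose equations.  The same argument for the injective \<open>N\<close> shows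
  that \<open>N\<^sup>-\<^sup>1\<close> exists.\<close>

text \<open>Tensors vanishing outside \<open>S \<times> S\<close> form the matrix algebra over \<open>S\<close>; on them
  \<open>teq\<close> becomes equality.\<close>

definition trestrict :: "nat list set \<Rightarrow> tensor \<Rightarrow> tensor" where
  "trestrict S A = (\<lambda>i j. if i \<in> S \<and> j \<in> S then A i j else 0)"

abbreviation restricted :: "nat list set \<Rightarrow> tensor \<Rightarrow> bool" where
  "restricted S A \<equiv> trestrict S A = A"

definition tmult :: "nat list set \<Rightarrow> tensor \<Rightarrow> tensor \<Rightarrow> tensor" where
  "tmult S A B = trestrict S (\<lambda>i j. \<Sum>k\<in>S. A i k * B k j)"

definition tone :: "nat list set \<Rightarrow> tensor" where
  "tone S = trestrict S tid"

definition tscale :: "complex \<Rightarrow> tensor \<Rightarrow> tensor" where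
  "tscale c A = (\<lambda>i j. c * A i j)"

definition tbasis :: "nat list \<times> nat list \<Rightarrow> tensor" where
  "tbasis p = (\<lambda>i j. if (i, j) = p then 1 else 0)"

primrec tpow :: "nat list set \<Rightarrow> tensor \<Rightarrow> nat \<Rightarrow> tensor" where
  "tpow S A 0 = tone S"
| "tpow S A (Suc n) = tmult S A (tpow S A n)"

interpretation tensor: vector_space tscale
  by unfold_locales (auto simp: tscale_def fun_eq_iff algebra_simps)

lemma tensor_sum_apply: "(sum F T :: tensor) i j = (\<Sum>x\<in>T. F x i j)"
  by (induction T rule: infinite_finite_induct) auto

lemma tscale_solve:
  assumes "c \<noteq> 0" "tscale c X + Y = 0"
  shows "tscale (- 1 / c) Y = X"
proof -
  have "Y = - tscale c X"
    using assms(2) by (simp add: add_eq_0_iff)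
  then show ?thesis
    using assms(1) by (simp add: tscale_def fun_eq_iff)
qed

locale index_set =
  fixes S :: "nat list set"
begin

abbreviation tmult_S :: "tensor \<Rightarrow> tensor \<Rightarrow> tensor" (infixl "\<odot>" 70) where
  "A \<odot> B \<equiv> tmult S A B"

lemma trestrict_idem [simp]: "trestrict S (trestrict S A) = trestrict S A"
  by (auto simp: trestrict_def fun_eq_iff)

lemma restricted_tmult [simp]: "restricted S (A \<odot> B)"
  by (auto simp: tmult_def trestrict_def fun_eq_iff)

lemma restricted_tone [simp]: "restricted S (tone S)"
  by (simp add: tone_def)

lemma restricted_tpow [simp]: "restricted S (tpow S A n)"
  by (cases n) simp_all

lemma tmult_trestrict_left [simp]: "trestrict S A \<odot> B = A \<odot> B"
  by (auto simp: tmult_def trestrict_def fun_eq_iff intro!: sum.cong)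

lemma tmult_trestrict_right [simp]: "A \<odot> trestrict S B = A \<odot> B"
  by (auto simp: tmult_def trestrict_def fun_eq_iff intro!: sum.cong)

lemma trestrict_add: "trestrict S (A + B) = trestrict S A + trestrict S B"
  by (auto simp: trestrict_def fun_eq_iff)

lemma trestrict_diff: "trestrict S (A - B) = trestrict S A - trestrict S B"
  by (auto simp: trestrict_def fun_eq_iff)

lemma trestrict_tscale: "trestrict S (tscale c A) = tscale c (trestrict S A)"
  by (auto simp: trestrict_def tscale_def fun_eq_iff)

lemma trestrict_zero [simp]: "trestrict S 0 = 0"
  by (simp add: trestrict_def fun_eq_iff)

lemma trestrict_sum: "trestrict S (sum F T) = (\<Sum>x\<in>T. trestrict S (F x))"
proof (induction T rule: infinite_finite_induct)
  case (insert x T)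
  then show ?case by (simp only: sum.insert[OF insert.hyps] trestrict_add insert.IH)
qed (simp_all only: not_False_eq_True sum.infinite sum.empty trestrict_zero)

lemma trestrict_tH: "trestrict S (tH A) = tH (trestrict S A)"
  by (auto simp: trestrict_def tH_def fun_eq_iff)

lemma tmult_assoc: "A \<odot> B \<odot> C = A \<odot> (B \<odot> C)"
proof -
  have "(\<Sum>k\<in>S. (\<Sum>l\<in>S. A i l * B l k) * C k j) = (\<Sum>l\<in>S. A i l * (\<Sum>k\<in>S. B l k * C k j))"
    for i j
  proof -
    have "(\<Sum>k\<in>S. (\<Sum>l\<in>S. A i l * B l k) * C k j) = (\<Sum>k\<in>S. \<Sum>l\<in>S. A i l * B l k * C k j)"
      by (simp add: sum_distrib_right)
    also have "\<dots> = (\<Sum>l\<in>S. \<Sum>k\<in>S. A i l * B l k * C k j)"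
      by (rule sum.swap)
    also have "\<dots> = (\<Sum>l\<in>S. A i l * (\<Sum>k\<in>S. B l k * C k j))"
      by (simp add: sum_distrib_left mult.assoc)
    finally show ?thesis .
  qed
  then show ?thesis
    by (auto simp: tmult_def trestrict_def fun_eq_iff intro!: sum.cong)
qed

lemma tone_tmult: "finite S \<Longrightarrow> tone S \<odot> A = trestrict S A"
  by (simp add: tmult_def trestrict_def tone_def tid_def fun_eq_iff
      if_distrib[where f = "\<lambda>t. t * _"] cong: if_cong)

lemma tmult_tone: "finite S \<Longrightarrow> A \<odot> tone S = trestrict S A"
  by (simp add: tmult_def trestrict_def tone_def tid_def fun_eq_iff
      if_distrib[where f = "\<lambda>t. _ * t"] cong: if_cong)

lemma tmult_add_left: "(A + B) \<odot> C = A \<odot> C + B \<odot> C"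
  by (auto simp: tmult_def trestrict_def distrib_right sum.distrib fun_eq_iff)

lemma tmult_add_right: "A \<odot> (B + C) = A \<odot> B + A \<odot> C"
  by (auto simp: tmult_def trestrict_def distrib_left sum.distrib fun_eq_iff)

lemma tmult_diff_right: "A \<odot> (B - C) = A \<odot> B - A \<odot> C"
  by (auto simp: tmult_def trestrict_def right_diff_distrib sum_subtractf fun_eq_iff)

lemma tmult_zero_left [simp]: "0 \<odot> A = 0"
  by (simp add: tmult_def trestrict_def fun_eq_iff)

lemma tmult_zero_right [simp]: "A \<odot> 0 = 0"
  by (simp add: tmult_def trestrict_def fun_eq_iff)

lemma tmult_tscale_left: "tscale c A \<odot> B = tscale c (A \<odot> B)"
  by (auto simp: tmult_def trestrict_def tscale_def sum_distrib_left mult.assoc fun_eq_iff)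

lemma tmult_tscale_right: "A \<odot> tscale c B = tscale c (A \<odot> B)"
  by (auto simp: tmult_def trestrict_def tscale_def sum_distrib_left mult.left_commute fun_eq_iff)

lemma tmult_sum_left: "sum F T \<odot> A = (\<Sum>x\<in>T. F x \<odot> A)"
proof (induction T rule: infinite_finite_induct)
  case (insert x T)
  then show ?case by (simp only: sum.insert[OF insert.hyps] tmult_add_left insert.IH)
qed (simp_all only: not_False_eq_True sum.infinite sum.empty tmult_zero_left)

lemma tmult_sum_right: "A \<odot> sum F T = (\<Sum>x\<in>T. A \<odot> F x)"
proof (induction T rule: infinite_finite_induct)
  case (insert x T)
  then show ?case by (simp only: sum.insert[OF insert.hyps] tmult_add_right insert.IH)
qed (simp_all only: not_False_eq_True sum.infinite sum.empty tmult_zero_right)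

lemma tH_tH [simp]: "tH (tH A) = A"
  by (simp add: tH_def)

lemma tH_tmult: "tH (A \<odot> B) = tH B \<odot> tH A"
  by (auto simp: tmult_def trestrict_def tH_def mult.commute fun_eq_iff)

lemma tH_tone: "tH (tone S) = tone S"
  by (auto simp: tone_def trestrict_def tH_def tid_def fun_eq_iff)

lemma tmult_tpow_commute:
  assumes "finite S"
  shows "A \<odot> tpow S A n = tpow S A n \<odot> A"
proof (induction n)
  case 0
  show ?case using assms by (simp add: tone_tmult tmult_tone)
next
  case (Suc n)
  have "A \<odot> tpow S A (Suc n) = A \<odot> (tpow S A n \<odot> A)"
    by (simp only: tpow.simps Suc.IH)
  then show ?case
    by (simp only: tpow.simps tmult_assoc)
qed

lemma restricted_in_span:
  assumes "finite S" "restricted S X"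
  shows "X \<in> tensor.span (tbasis ` (S \<times> S))"
proof -
  have "X = (\<Sum>p\<in>S \<times> S. tscale (X (fst p) (snd p)) (tbasis p))" (is "X = ?Y")
  proof (intro ext)
    fix i j
    have "?Y i j = (\<Sum>p\<in>S \<times> S. if (i, j) = p then X i j else 0)"
      by (auto simp: tensor_sum_apply tscale_def tbasis_def intro: sum.cong)
    also have "\<dots> = trestrict S X i j"
      using assms(1) by (simp add: trestrict_def)
    finally show "X i j = ?Y i j"
      using assms(2) by simp
  qed
  also have "\<dots> \<in> tensor.span (tbasis ` (S \<times> S))"
    by (intro tensor.span_sum tensor.span_scale tensor.span_base) auto
  finally show ?thesis .
qed

lemma tpow_linear_dependence:
  assumes "finite S"
  obtains f n where "\<exists>i<n. f i \<noteq> 0" "(\<Sum>i<n. tscale (f i) (tpow S A i)) = 0"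
proof -
  define N where "N = card (S \<times> S)"
  show ?thesis
  proof (cases "inj_on (tpow S A) {..N}")
    case False
    then obtain i j where ij: "i \<le> N" "j \<le> N" "i \<noteq> j" "tpow S A i = tpow S A j"
      by (auto simp: inj_on_def)
    define f :: "nat \<Rightarrow> complex" where "f t = (if t = i then 1 else if t = j then -1 else 0)" for t
    have "(\<Sum>t<Suc N. tscale (f t) (tpow S A t))
        = (\<Sum>t<Suc N. (if t = i then tpow S A i else 0) - (if t = j then tpow S A j else 0))"
      by (rule sum.cong) (auto simp: f_def tscale_def fun_eq_iff ij)
    also have "\<dots> = 0"
      using ij by (simp add: sum_subtractf)
    finally show ?thesis
      using ij by (intro that[of "Suc N" f]) (auto simp: f_def)
  next
    case True
    define P where "P = tpow S A ` {..N}"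
    have "P \<subseteq> tensor.span (tbasis ` (S \<times> S))"
      using assms by (auto simp: P_def intro: restricted_in_span)
    moreover have "card (tbasis ` (S \<times> S)) < card P"
      using True card_image_le[of "S \<times> S" tbasis] assms by (simp add: P_def N_def card_image)
    ultimately have "tensor.dependent P"
      using tensor.independent_span_bound[of "tbasis ` (S \<times> S)" P] assms by auto
    then obtain u where u: "\<exists>v\<in>P. u v \<noteq> 0" "(\<Sum>v\<in>P. tscale (u v) v) = 0"
      by (auto simp: tensor.dependent_finite P_def)
    have "(\<Sum>t<Suc N. tscale (u (tpow S A t)) (tpow S A t)) = 0"
      using u(2) by (simp add: P_def sum.reindex[OF True] lessThan_Suc_atMost)
    moreover obtain t where "t \<le> N" "u (tpow S A t) \<noteq> 0"
      using u(1) by (auto simp: P_def)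
    ultimately show ?thesis
      by (intro that[of "Suc N" "u \<circ> tpow S A"]) (auto simp flip: less_Suc_eq_le)
  qed
qed

lemma tpow_sum_Suc:
  "(\<Sum>i<Suc n. tscale (f i) (tpow S A i))
     = tscale (f 0) (tone S) + A \<odot> (\<Sum>i<n. tscale (f (Suc i)) (tpow S A i))"
  unfolding sum.lessThan_Suc_shift by (simp add: tmult_sum_right tmult_tscale_right)

lemma annihilator_from_relation:
  assumes "finite S" "\<exists>i<n. f i \<noteq> 0" "tpow S A k \<odot> (\<Sum>i<n. tscale (f i) (tpow S A i)) = 0"
  shows "\<exists>k c Q. c \<noteq> 0 \<and> restricted S Q \<and> A \<odot> Q = Q \<odot> A
    \<and> tpow S A k \<odot> (tscale c (tone S) + A \<odot> Q) = 0"
  using assms(2,3)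
proof (induction n arbitrary: f k)
  case 0
  then show ?case by simp
next
  case (Suc n)
  define Q where "Q = (\<Sum>i<n. tscale (f (Suc i)) (tpow S A i))"
  have Q: "restricted S Q" "A \<odot> Q = Q \<odot> A"
    using assms(1) by (simp_all add: Q_def trestrict_sum trestrict_tscale tmult_sum_left
        tmult_sum_right tmult_tscale_left tmult_tscale_right tmult_tpow_commute)
  have rel: "tpow S A k \<odot> (tscale (f 0) (tone S) + A \<odot> Q) = 0"
    using Suc.prems(2) by (simp only: Q_def tpow_sum_Suc)
  show ?case
  proof (cases "f 0 = 0")
    case False
    with Q rel show ?thesis by blast
  next
    case True
    then have "\<exists>i<n. f (Suc i) \<noteq> 0"
      using Suc.prems(1) less_Suc_eq_0_disj by auto
    moreover have "tpow S A (Suc k) \<odot> Q = 0"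
    proof -
      have "tpow S A (Suc k) \<odot> Q = tpow S A k \<odot> (A \<odot> Q)"
        using assms(1) by (simp add: tmult_tpow_commute tmult_assoc)
      also have "\<dots> = 0"
        using rel True by simp
      finally show ?thesis .
    qed
    ultimately show ?thesis
      using Suc.IH[of "\<lambda>i. f (Suc i)" "Suc k"] by (simp add: Q_def)
  qed
qed

text \<open>What is left of a linear dependence among the powers of \<open>A\<close> after dividing out the
  largest power of \<open>A\<close> that it contains.\<close>

lemma annihilator:
  assumes "finite S"
  obtains k c Q where "c \<noteq> 0" "restricted S Q" "A \<odot> Q = Q \<odot> A"
    "tpow S A k \<odot> (tscale c (tone S) + A \<odot> Q) = 0"
proof -
  obtain f n where "\<exists>i<n. f i \<noteq> 0" "(\<Sum>i<n. tscale (f i) (tpow S A i)) = 0"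
    using tpow_linear_dependence[OF assms] .
  then have "tpow S A 0 \<odot> (\<Sum>i<n. tscale (f i) (tpow S A i)) = 0"
    by simp
  then show ?thesis
    using annihilator_from_relation[OF assms] \<open>\<exists>i<n. f i \<noteq> 0\<close> that by blast
qed

lemma injective_imp_invertible:
  assumes "finite S" "restricted S M"
    and injective: "\<And>Y. restricted S Y \<Longrightarrow> M \<odot> Y = 0 \<Longrightarrow> Y = 0"
  obtains X where "restricted S X" "M \<odot> X = tone S" "X \<odot> M = tone S"
proof -
  obtain k c Q where c: "c \<noteq> 0" and Q: "restricted S Q" "M \<odot> Q = Q \<odot> M"
    and rel: "tpow S M k \<odot> (tscale c (tone S) + M \<odot> Q) = 0"
    using annihilator[OF assms(1)] .
  have cancel: "Y = 0" if "restricted S Y" "tpow S M n \<odot> Y = 0" for n Y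
    using that(2)
  proof (induction n)
    case 0
    then show ?case
      using assms(1) that(1) by (simp add: tone_tmult)
  next
    case (Suc n)
    have "M \<odot> (tpow S M n \<odot> Y) = 0"
      using Suc.prems by (simp only: tpow.simps tmult_assoc)
    then have "tpow S M n \<odot> Y = 0"
      by (rule injective[rotated]) simp
    then show ?case
      by (rule Suc.IH)
  qed
  have "tscale c (tone S) + M \<odot> Q = 0"
    by (rule cancel[OF _ rel]) (simp add: trestrict_add trestrict_tscale)
  then have inverse: "tscale (- 1 / c) (M \<odot> Q) = tone S"
    by (rule tscale_solve[OF c])
  define X where "X = tscale (- 1 / c) Q"
  have "restricted S X"
    using Q(1) by (simp only: X_def trestrict_tscale)
  moreover have "M \<odot> X = tone S"
    using inverse by (simp only: X_def tmult_tscale_right)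
  moreover have "X \<odot> M = tone S"
    using inverse by (simp only: X_def tmult_tscale_left Q(2))
  ultimately show thesis
    by (rule that)
qed

end

locale weighted = index_set +
  fixes M Minv :: tensor
  assumes finite_S: "finite S"
    and restricted_M: "restricted S M" and restricted_Minv: "restricted S Minv"
    and hermitian_M: "tH M = M"
    and M_Minv: "M \<odot> Minv = tone S" and Minv_M: "Minv \<odot> M = tone S"
    and definite: "\<And>X. restricted S X \<Longrightarrow> tH X \<odot> (M \<odot> X) = 0 \<Longrightarrow> X = 0"
begin

definition adj :: "tensor \<Rightarrow> tensor" where
  "adj C = Minv \<odot> (tH C \<odot> M)"

definition penrose :: "tensor \<Rightarrow> tensor \<Rightarrow> bool" where
  "penrose A X \<longleftrightarrow> A \<odot> X \<odot> A = A \<and> X \<odot> A \<odot> X = X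
     \<and> adj (A \<odot> X) = A \<odot> X \<and> adj (X \<odot> A) = X \<odot> A"

lemma restricted_adj [simp]: "restricted S (adj C)"
  by (simp add: adj_def)

lemma tone_left: "restricted S A \<Longrightarrow> tone S \<odot> A = A"
  using tone_tmult[OF finite_S] by simp

lemma tone_right: "restricted S A \<Longrightarrow> A \<odot> tone S = A"
  using tmult_tone[OF finite_S] by simp

lemma M_Minv_tmult: "M \<odot> (Minv \<odot> X) = trestrict S X"
  by (simp add: tmult_assoc[symmetric] M_Minv tone_tmult[OF finite_S])

lemma Minv_M_tmult: "Minv \<odot> (M \<odot> X) = trestrict S X"
  by (simp add: tmult_assoc[symmetric] Minv_M tone_tmult[OF finite_S])

lemma hermitian_Minv: "tH Minv = Minv"
proof -
  have "restricted S (tH Minv)"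
    using restricted_Minv by (simp add: trestrict_tH)
  then have "tH Minv = tH Minv \<odot> (M \<odot> Minv)"
    by (simp add: M_Minv tone_right)
  also have "\<dots> = tH (M \<odot> Minv) \<odot> Minv"
    by (simp add: tmult_assoc tH_tmult hermitian_M)
  finally show ?thesis
    using restricted_Minv by (simp add: M_Minv tH_tone tone_left)
qed

lemma adj_tmult: "adj (C \<odot> D) = adj D \<odot> adj C"
  by (simp add: adj_def tH_tmult tmult_assoc M_Minv_tmult)

lemma adj_adj: "restricted S C \<Longrightarrow> adj (adj C) = C"
  by (simp add: adj_def tH_tmult tmult_assoc hermitian_M hermitian_Minv M_Minv_tmult
      Minv_M_tmult Minv_M tone_right)

lemma adj_definite:
  assumes "restricted S X" "adj X \<odot> X = 0"
  shows "X = 0"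
proof (rule definite[OF assms(1)])
  have "tH X \<odot> (M \<odot> X) = M \<odot> (adj X \<odot> X)"
    by (simp add: adj_def tmult_assoc M_Minv_tmult trestrict_tH)
  then show "tH X \<odot> (M \<odot> X) = 0"
    using assms(2) by simp
qed

lemma adj_eq_iff_hermitian:
  assumes "restricted S P"
  shows "adj P = P \<longleftrightarrow> tH (M \<odot> P) = M \<odot> P"
proof -
  have tH_M: "tH (M \<odot> P) = M \<odot> adj P"
    by (simp add: adj_def tH_tmult hermitian_M M_Minv_tmult)
  show ?thesis
  proof
    assume "adj P = P"
    then show "tH (M \<odot> P) = M \<odot> P"
      by (simp add: tH_M)
  next
    assume "tH (M \<odot> P) = M \<odot> P"
    then have "Minv \<odot> (M \<odot> adj P) = Minv \<odot> (M \<odot> P)"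
      by (simp add: tH_M)
    then show "adj P = P"
      using assms by (simp add: Minv_M_tmult)
  qed
qed

context
  fixes A :: tensor
  assumes restricted_A: "restricted S A" and normal: "adj A \<odot> A = A \<odot> adj A"
begin

text \<open>\<open>adj (A Y) (A Y)\<close> and \<open>adj (adj A Y) (adj A Y)\<close> differ only by the order of
  \<open>adj A\<close> and \<open>A\<close> in the middle.\<close>

lemma normal_kernel_adj:
  assumes "restricted S Y"
  shows "A \<odot> Y = 0 \<longleftrightarrow> adj A \<odot> Y = 0"
proof
  assume "A \<odot> Y = 0"
  have "adj (adj A \<odot> Y) \<odot> (adj A \<odot> Y) = adj Y \<odot> (A \<odot> adj A) \<odot> Y"
    using restricted_A by (simp add: adj_tmult adj_adj tmult_assoc)
  also have "\<dots> = adj Y \<odot> adj A \<odot> (A \<odot> Y)"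
    by (simp add: normal[symmetric] tmult_assoc)
  also have "\<dots> = 0"
    by (simp add: \<open>A \<odot> Y = 0\<close>)
  finally show "adj A \<odot> Y = 0"
    by (rule adj_definite[rotated]) simp
next
  assume "adj A \<odot> Y = 0"
  have "adj (A \<odot> Y) \<odot> (A \<odot> Y) = adj Y \<odot> (adj A \<odot> A) \<odot> Y"
    by (simp add: adj_tmult tmult_assoc)
  also have "\<dots> = adj Y \<odot> A \<odot> (adj A \<odot> Y)"
    by (simp add: normal tmult_assoc)
  also have "\<dots> = 0"
    by (simp add: \<open>adj A \<odot> Y = 0\<close>)
  finally show "A \<odot> Y = 0"
    by (rule adj_definite[rotated]) simp
qed

lemma normal_kernel_square:
  assumes "A \<odot> (A \<odot> Y) = 0"
  shows "A \<odot> Y = 0"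
proof (rule adj_definite)
  have "adj A \<odot> (A \<odot> Y) = 0"
    using assms normal_kernel_adj[of "A \<odot> Y"] by simp
  then show "adj (A \<odot> Y) \<odot> (A \<odot> Y) = 0"
    by (simp add: adj_tmult tmult_assoc)
qed simp

lemma normal_kernel_tpow:
  assumes "restricted S Y" "tpow S A k \<odot> Y = 0"
  shows "A \<odot> Y = 0"
  using assms
proof (induction k arbitrary: Y)
  case 0
  have "Y = 0"
    using 0(2) by (simp only: tpow.simps tone_left[OF 0(1)])
  then show ?case
    by (simp only: tmult_zero_right)
next
  case (Suc k)
  have "tpow S A k \<odot> (A \<odot> Y) = 0"
    using Suc.prems(2) by (simp only: tpow.simps tmult_tpow_commute[OF finite_S] tmult_assoc)
  then have "A \<odot> (A \<odot> Y) = 0"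
    by (rule Suc.IH[rotated]) simp
  then show ?case
    by (rule normal_kernel_square)
qed

lemma normal_absorb_iff:
  assumes "restricted S P"
  shows "A \<odot> P = A \<longleftrightarrow> adj A \<odot> P = adj A"
proof -
  have "restricted S (tone S - P)"
    using assms by (simp add: trestrict_diff)
  then have "A \<odot> (tone S - P) = 0 \<longleftrightarrow> adj A \<odot> (tone S - P) = 0"
    by (rule normal_kernel_adj)
  then show ?thesis
    using restricted_A by (auto simp: tmult_diff_right tone_right)
qed

lemma normal_group_inverse:
  obtains G where "restricted S G" "A \<odot> G = G \<odot> A" "A \<odot> (A \<odot> G) = A"
proof -
  obtain k c Q where c: "c \<noteq> 0" and Q: "restricted S Q" "A \<odot> Q = Q \<odot> A"
    and rel: "tpow S A k \<odot> (tscale c (tone S) + A \<odot> Q) = 0"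
    using annihilator[OF finite_S] .
  have "A \<odot> (tscale c (tone S) + A \<odot> Q) = 0"
    by (rule normal_kernel_tpow[OF _ rel]) (simp add: trestrict_add trestrict_tscale)
  then have "tscale c A + A \<odot> (A \<odot> Q) = 0"
    using restricted_A by (simp add: tmult_add_right tmult_tscale_right tone_right)
  then have AAQ: "tscale (- 1 / c) (A \<odot> (A \<odot> Q)) = A"
    by (rule tscale_solve[OF c])
  define G where "G = tscale (- 1 / c) Q"
  have "A \<odot> (A \<odot> G) = A"
    using AAQ by (simp only: G_def tmult_tscale_right)
  moreover have "restricted S G"
    using Q(1) by (simp only: G_def trestrict_tscale)
  moreover have "A \<odot> G = G \<odot> A"
    by (simp only: G_def tmult_tscale_left tmult_tscale_right Q(2))
  ultimately show thesis
    using that by blast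
qed

lemma normal_projector_adj:
  assumes "A \<odot> (A \<odot> G) = A"
  shows "adj (A \<odot> G) = A \<odot> G"
proof -
  define P where "P = A \<odot> G"
  have "adj A \<odot> P = adj A"
    using normal_absorb_iff[of P] assms by (simp add: P_def)
  then have "adj (adj A \<odot> P) = A"
    using restricted_A by (simp add: adj_adj)
  then have "adj P \<odot> A = A"
    using restricted_A by (simp add: adj_tmult adj_adj)
  then have PP: "adj P \<odot> P = P"
    by (simp add: P_def flip: tmult_assoc)
  have "restricted S P"
    by (simp add: P_def)
  then have "adj (adj P \<odot> P) = adj P \<odot> P"
    by (simp only: adj_tmult adj_adj)
  then show ?thesis
    by (simp only: PP flip: P_def)
qed

lemma penrose_exists: "\<exists>X. restricted S X \<and> penrose A X"
proof -
  obtain G where G: "restricted S G" "A \<odot> G = G \<odot> A" "A \<odot> (A \<odot> G) = A"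
    by (rule normal_group_inverse)
  define X where "X = A \<odot> (G \<odot> G)"
  have "A \<odot> X = A \<odot> (A \<odot> G) \<odot> G"
    by (simp add: X_def tmult_assoc)
  then have AX: "A \<odot> X = A \<odot> G"
    by (simp add: G(3))
  have XA: "X \<odot> A = A \<odot> G"
  proof -
    have "X \<odot> A = A \<odot> (A \<odot> G) \<odot> G"
      by (simp add: X_def tmult_assoc G(2))
    then show ?thesis
      by (simp add: G(3))
  qed
  have AGA: "A \<odot> G \<odot> A = A"
    by (simp add: tmult_assoc G(3) flip: G(2))
  have "A \<odot> G \<odot> X = X"
    by (simp add: X_def AGA flip: tmult_assoc)
  then have "penrose A X"
    by (simp add: penrose_def AX XA AGA normal_projector_adj G(3))
  then show ?thesis
    by (intro exI[of _ X]) (simp add: X_def)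
qed

lemma penrose_commute:
  assumes "penrose A X"
  shows "A \<odot> X = X \<odot> A"
proof -
  have AXA: "A \<odot> X \<odot> A = A" and AX: "adj (A \<odot> X) = A \<odot> X" and XA: "adj (X \<odot> A) = X \<odot> A"
    using assms by (simp_all add: penrose_def)
  have "adj A \<odot> (X \<odot> A) = adj A"
    using AXA normal_absorb_iff[of "X \<odot> A"] by (simp add: tmult_assoc)
  then have "adj (adj A \<odot> (X \<odot> A)) = A"
    using restricted_A by (simp add: adj_adj)
  then have XAA: "X \<odot> A \<odot> A = A"
    by (simp only: adj_tmult[of "adj A" "X \<odot> A"] adj_adj[OF restricted_A] XA)
  have "adj A \<odot> (A \<odot> X) = adj (A \<odot> X \<odot> A)"
    by (simp only: adj_tmult[of "A \<odot> X" A] AX)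
  then have "adj A \<odot> (A \<odot> X) = adj A"
    by (simp add: AXA)
  then have AAX: "A \<odot> (A \<odot> X) = A"
    using normal_absorb_iff[of "A \<odot> X"] by simp
  have "A \<odot> X = X \<odot> A \<odot> A \<odot> X"
    by (simp add: XAA)
  also have "\<dots> = X \<odot> (A \<odot> (A \<odot> X))"
    by (simp add: tmult_assoc)
  finally show ?thesis
    by (simp add: AAX)
qed

end

end

lemma finite_idx: "finite (idx I)"
proof (rule finite_subset)
  show "idx I \<subseteq> {xs. set xs \<subseteq> {..<sum_list I} \<and> length xs = length I}"
    by (auto simp: idx_def in_set_conv_nth) (metis elem_le_sum_list order_less_le_trans)
  show "finite {xs. set xs \<subseteq> {..<sum_list I} \<and> length xs = length I}"
    by (rule finite_lists_length_eq) simp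
qed

lemma teq_iff_trestrict: "teq I X Y \<longleftrightarrow> trestrict (idx I) X = trestrict (idx I) Y"
  by (auto simp: teq_def trestrict_def fun_eq_iff)

lemma trestrict_einstein: "trestrict (idx I) (einstein I A B) = tmult (idx I) A B"
  by (simp add: tmult_def einstein_def)

lemma tmult_einstein_left [simp]:
  "tmult (idx I) (einstein I A B) C = tmult (idx I) (tmult (idx I) A B) C"
  using index_set.tmult_trestrict_left[of "idx I" "einstein I A B" C]
  by (simp add: trestrict_einstein)

lemma tmult_einstein_right [simp]:
  "tmult (idx I) C (einstein I A B) = tmult (idx I) C (tmult (idx I) A B)"
  using index_set.tmult_trestrict_right[of "idx I" C "einstein I A B"]
  by (simp add: trestrict_einstein)

locale hpd_weight = index_set "idx I" for I :: "nat list" +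
  fixes M :: tensor
  assumes hpd: "hpd I M"
begin

lemma hpd_definite:
  assumes "restricted (idx I) X" "tmult (idx I) (tH X) (tmult (idx I) M X) = 0"
  shows "X = 0"
proof (rule ccontr)
  assume "X \<noteq> 0"
  then obtain i j where Xij: "X i j \<noteq> 0"
    by (auto simp: fun_eq_iff)
  then have ij: "i \<in> idx I" "j \<in> idx I"
    using fun_cong[OF fun_cong[OF assms(1)], of i j] by (auto simp: trestrict_def split: if_splits)
  have pos: "(\<Sum>k\<in>idx I. \<Sum>l\<in>idx I. cnj (x k) * M k l * x l) > 0"
    if "\<exists>i\<in>idx I. x i \<noteq> 0" for x
    using hpd that unfolding hpd_def by blast
  have "(\<Sum>k\<in>idx I. \<Sum>l\<in>idx I. cnj (X k j) * M k l * X l j) > 0"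
    by (rule pos) (use ij Xij in blast)
  moreover have "tmult (idx I) (tH X) (tmult (idx I) M X) j j
      = (\<Sum>k\<in>idx I. \<Sum>l\<in>idx I. cnj (X k j) * M k l * X l j)"
    using ij by (simp add: tmult_def trestrict_def tH_def sum_distrib_left mult.assoc cong: sum.cong)
  ultimately show False
    using assms(2) by simp
qed

lemma tinv_inverse:
  "tmult (idx I) M (tinv I M) = tone (idx I)" "tmult (idx I) (tinv I M) M = tone (idx I)"
proof -
  have injective: "Y = 0" if "restricted (idx I) Y" "tmult (idx I) (trestrict (idx I) M) Y = 0" for Y
    using that hpd_definite[of Y] by simp
  obtain X where
    "tmult (idx I) (trestrict (idx I) M) X = tone (idx I)"
    "tmult (idx I) X (trestrict (idx I) M) = tone (idx I)"
    by (rule injective_imp_invertible[OF finite_idx trestrict_idem injective])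
  then have "is_tinv I M X"
    by (simp add: is_tinv_def teq_iff_trestrict trestrict_einstein flip: tone_def)
  then have "is_tinv I M (tinv I M)"
    unfolding tinv_def by (rule someI[of "is_tinv I M"])
  then show "tmult (idx I) M (tinv I M) = tone (idx I)" "tmult (idx I) (tinv I M) M = tone (idx I)"
    by (simp_all add: is_tinv_def teq_iff_trestrict trestrict_einstein flip: tone_def)
qed

end

sublocale hpd_weight \<subseteq> weighted "idx I" "trestrict (idx I) M" "trestrict (idx I) (tinv I M)"
proof unfold_locales
  show "finite (idx I)"
    by (rule finite_idx)
  show "tH (trestrict (idx I) M) = trestrict (idx I) M"
    using hpd by (simp add: hpd_def hermitian_def teq_iff_trestrict flip: trestrict_tH)
  show "tmult (idx I) (trestrict (idx I) M) (trestrict (idx I) (tinv I M)) = tone (idx I)"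
    "tmult (idx I) (trestrict (idx I) (tinv I M)) (trestrict (idx I) M) = tone (idx I)"
    by (simp_all add: tinv_inverse)
  show "X = 0" if "restricted (idx I) X" "tmult (idx I) (tH X) (tmult (idx I) (trestrict (idx I) M) X) = 0" for X
    using that hpd_definite[of X] by simp
qed simp_all

context hpd_weight
begin

lemma trestrict_wct: "trestrict (idx I) (wct I M A) = adj (trestrict (idx I) A)"
  by (simp add: wct_def adj_def trestrict_einstein tmult_assoc flip: trestrict_tH)

lemma is_wmp_iff_penrose:
  "is_wmp I M A X \<longleftrightarrow> penrose (trestrict (idx I) A) (trestrict (idx I) X)"
  by (simp add: is_wmp_def penrose_def teq_iff_trestrict trestrict_einstein trestrict_tH
      adj_eq_iff_hermitian)

end

theorem theorem4p11:
  fixes I :: "nat list" and A M :: tensor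
  assumes "hpd I M"
    and "teq I (einstein I (wct I M A) A) (einstein I A (wct I M A))"
  shows "teq I (einstein I A (wmp I M A)) (einstein I (wmp I M A) A)"
proof -
  interpret hpd_weight I M
    by unfold_locales (rule assms(1))
  define Ar where "Ar = trestrict (idx I) A"
  have restricted: "restricted (idx I) Ar"
    by (simp add: Ar_def)
  have normal: "tmult (idx I) (adj Ar) Ar = tmult (idx I) Ar (adj Ar)"
    using assms(2) by (simp add: teq_iff_trestrict trestrict_einstein Ar_def flip: trestrict_wct)
  obtain X where "restricted (idx I) X" "penrose Ar X"
    using penrose_exists[OF restricted normal] by blast
  then have "is_wmp I M A X"
    by (simp add: is_wmp_iff_penrose Ar_def)
  then have "is_wmp I M A (wmp I M A)"
    unfolding wmp_def by (rule someI[of "is_wmp I M A"])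
  then have "penrose Ar (trestrict (idx I) (wmp I M A))"
    by (simp add: is_wmp_iff_penrose Ar_def)
  then have "tmult (idx I) Ar (trestrict (idx I) (wmp I M A))
      = tmult (idx I) (trestrict (idx I) (wmp I M A)) Ar"
    by (rule penrose_commute[OF restricted normal])
  then show ?thesis
    by (simp add: teq_iff_trestrict trestrict_einstein Ar_def)
qed

end
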